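(* Let $N\ge 2$. For generic $x\in\mathbb{C}^N$ the Heisenberg bispectrum $B^H(x)$ determines the magnitude vector $(|x_0|,\dots,|x_{N-1}|)$ up to a cyclic shift and the Fourier-magnitude vector $(|\hat x[0]|,\dots,|\hat x[N-1]|)$ up to a cyclic shift: that is, if $x'\in\mathbb{C}^N$ satisfies $B^H(x')=B^H(x)$, then there exist $k_0,n_0\in\mathbb{Z}_N$ with $|x'_j|=|x_{j+k_0}|$ and $|\hat x'[k]|=|\hat x[k+n_0]|$ for all $j,k\in\mathbb{Z}_N$.
   Context: $\zeta=e^{2\pi i/N}$; indices modulo $N$. The discrete Fourier transform of $u\in\mathbb{C}^N$ is $\hat u[k]=\sum_{j=0}^{N-1}u_j\zeta^{-jk}$. For $x\in\mathbb{C}^N$ let $y=(|x_0|^2,\dots,|x_{N-1}|^2)$ and $z=(|\hat x[0]|^2,\dots,|\hat x[N-1]|^2)$, define $B^M(x)(i,j)=\hat y[i]\hat y[j]\hat y[N-i-j]$, $B^{FM}(x)(i,j)=\hat z[i]\hat z[j]\hat z[N-i-j]$ for $i,j\in\mathbb{Z}_N$, and $B^H(x)=(B^M(x),B^{FM}(x))$. "Generic" means: for all $x$ outside a fixed proper real algebraic subset of $\mathbb{C}^N\cong\mathbb{R}^{2N}$. *)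

theory Defs
  imports "HOL-Analysis.Analysis"
begin

text \<open>Vectors in C^N are represented as functions nat => complex; only the
  entries with index < N are used. Indices are taken modulo N.\<close>

text \<open>Discrete Fourier transform: dft N u k = sum_{j<N} u_j zeta^(-jk),
  zeta = exp(2 pi i / N); the frequency k is an integer (taken mod N implicitly,
  since the expression is N-periodic in k).\<close>
definition dft :: "nat \<Rightarrow> (nat \<Rightarrow> complex) \<Rightarrow> int \<Rightarrow> complex" where
  "dft N u k = (\<Sum>j<N. u j * cis (- 2 * pi * real j * real_of_int k / real N))"

definition mag_sq :: "(nat \<Rightarrow> complex) \<Rightarrow> (nat \<Rightarrow> complex)" where
  "mag_sq x = (\<lambda>j. complex_of_real ((cmod (x j))\<^sup>2))"

definition fourier_mag_sq :: "nat \<Rightarrow> (nat \<Rightarrow> complex) \<Rightarrow> (nat \<Rightarrow> complex)" where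
  "fourier_mag_sq N x = (\<lambda>k. complex_of_real ((cmod (dft N x (int k)))\<^sup>2))"

definition bispectrum :: "nat \<Rightarrow> (nat \<Rightarrow> complex) \<Rightarrow> int \<Rightarrow> int \<Rightarrow> complex" where
  "bispectrum N w i j = dft N w i * dft N w j * dft N w (int N - i - j)"

definition BM :: "nat \<Rightarrow> (nat \<Rightarrow> complex) \<Rightarrow> int \<Rightarrow> int \<Rightarrow> complex" where
  "BM N x = bispectrum N (mag_sq x)"

definition BFM :: "nat \<Rightarrow> (nat \<Rightarrow> complex) \<Rightarrow> int \<Rightarrow> int \<Rightarrow> complex" where
  "BFM N x = bispectrum N (fourier_mag_sq N x)"

definition BH :: "nat \<Rightarrow> (nat \<Rightarrow> complex) \<Rightarrow> (int \<times> int \<Rightarrow> complex) \<times> (int \<times> int \<Rightarrow> complex)" where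
  "BH N x = ((\<lambda>(i,j). if 0 \<le> i \<and> i < int N \<and> 0 \<le> j \<and> j < int N then BM N x i j else 0),
             (\<lambda>(i,j). if 0 \<le> i \<and> i < int N \<and> 0 \<le> j \<and> j < int N then BFM N x i j else 0))"

inductive real_poly_fun :: "nat \<Rightarrow> ((nat \<Rightarrow> complex) \<Rightarrow> real) \<Rightarrow> bool" for N where
  const: "real_poly_fun N (\<lambda>x. c)"
| re_coord: "j < N \<Longrightarrow> real_poly_fun N (\<lambda>x. Re (x j))"
| im_coord: "j < N \<Longrightarrow> real_poly_fun N (\<lambda>x. Im (x j))"
| add: "real_poly_fun N p \<Longrightarrow> real_poly_fun N q \<Longrightarrow> real_poly_fun N (\<lambda>x. p x + q x)"
| mult: "real_poly_fun N p \<Longrightarrow> real_poly_fun N q \<Longrightarrow> real_poly_fun N (\<lambda>x. p x * q x)"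

definition real_algebraic_set :: "nat \<Rightarrow> (nat \<Rightarrow> complex) set \<Rightarrow> bool" where
  "real_algebraic_set N Z \<longleftrightarrow>
     (\<exists>P. finite P \<and> (\<forall>p\<in>P. real_poly_fun N p) \<and> Z = {x. \<forall>p\<in>P. p x = 0})"

end

(*
  Write W = dft N w for a real vector w with nowhere vanishing DFT. Since W (-k) = cnj (W k), the
  bispectrum of w is W i * W j * cnj (W (i + j)). If w' has the same bispectrum, the entry (0,0)
  gives W' 0 ^ 3 = W 0 ^ 3 with both values real, so W' 0 = W 0; the entries (k,0) then give
  |W' k| = |W k|, and the remaining entries say that the unimodular ratio r k = W' k / W k is a
  character of Z_N, i.e. r k = \<omega>^(s k) for an N-th root of unity \<omega>. By Fourier inversion w' is
  then the cyclic shift of w by s. This is applied to y = |x|^2 and z = |dft x|^2, and the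
  exceptional set is the zero set of the polynomial prod_k dft y k * dft z k, which does not
  vanish at x = (2,1,...,1).
*)
theory Submission
  imports Defs
begin

lemma sum_cis_roots_of_unity:
  assumes "N > 0"
  shows "(\<Sum>j<N. cis (2 * pi * real j * real_of_int d / real N)) = (if int N dvd d then of_nat N else 0)"
proof -
  define \<omega> where "\<omega> = cis (2 * pi * real_of_int d / real N)"
  have powers: "cis (2 * pi * real j * real_of_int d / real N) = \<omega> ^ j" for j
    unfolding \<omega>_def Complex.DeMoivre by (simp add: field_simps)
  have "\<omega> ^ N = cis (2 * pi * real_of_int d)"
    unfolding \<omega>_def Complex.DeMoivre using assms by simp
  also have "\<dots> = 1" by (rule cis_multiple_2pi) simp
  finally have "\<omega> ^ N = 1" .
  show ?thesis
  proof (cases "int N dvd d")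
    case True
    then obtain q where q: "d = int N * q" by blast
    have "\<omega> = cis (2 * pi * real_of_int q)"
      unfolding \<omega>_def q using assms by (intro arg_cong[where f = cis]) simp
    also have "\<dots> = 1" by (rule cis_multiple_2pi) simp
    finally have "\<omega> = 1" .
    then show ?thesis using True by (simp add: powers)
  next
    case False
    have "\<omega> \<noteq> 1"
    proof
      assume "\<omega> = 1"
      then have "cos (2 * pi * real_of_int d / real N) = 1"
        unfolding \<omega>_def by (simp add: complex_eq_iff)
      then obtain n :: int where "2 * pi * real_of_int d / real N = real_of_int n * 2 * pi"
        by (auto simp: cos_one_2pi_int)
      then have "real_of_int d = real_of_int (int N * n)" using assms by (simp add: field_simps)
      then have "d = int N * n" by (simp only: of_int_eq_iff)
      with False show False by simp
    qed
    with \<open>\<omega> ^ N = 1\<close> False show ?thesis by (simp add: powers sum_gp_strict)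
  qed
qed

lemma dft_cong_mod:
  assumes "N > 0" and "k mod int N = l mod int N"
  shows "dft N u k = dft N u l"
proof -
  obtain q where q: "k = l + int N * q"
    using assms(2) by (metis mod_eq_dvd_iff dvd_def add_diff_cancel_left' diff_add_cancel)
  have "cis (- 2 * pi * real j * real_of_int k / real N) = cis (- 2 * pi * real j * real_of_int l / real N)" for j
  proof -
    have "- 2 * pi * real j * real_of_int k / real N
          = - 2 * pi * real j * real_of_int l / real N + 2 * pi * real_of_int (- int j * q)"
      unfolding q using assms(1) by (simp add: field_simps)
    then show ?thesis by (simp only: cis_mult[symmetric] cis_multiple_2pi Ints_of_int) simp
  qed
  then show ?thesis unfolding dft_def by simp
qed

lemma dft_mod_nat: "N > 0 \<Longrightarrow> dft N u (int (k mod N)) = dft N u (int k)"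
  by (rule dft_cong_mod) (simp_all add: zmod_int)

lemma dft_uminus_real:
  assumes "\<And>j. j < N \<Longrightarrow> u j \<in> \<real>"
  shows "dft N u (- k) = cnj (dft N u k)"
  unfolding dft_def cnj_sum
proof (rule sum.cong[OF refl])
  fix j assume "j \<in> {..<N}"
  then have "cnj (u j) = u j" using assms by (simp add: Reals_cnj_iff)
  then show "u j * cis (- 2 * pi * real j * real_of_int (- k) / real N) =
             cnj (u j * cis (- 2 * pi * real j * real_of_int k / real N))"
    by (simp add: cis_cnj)
qed

lemma dft_zero_in_Reals: "(\<And>j. j < N \<Longrightarrow> u j \<in> \<real>) \<Longrightarrow> dft N u 0 \<in> \<real>"
  unfolding dft_def by auto

lemma bispectrum_real_eq:
  assumes "N > 0" and "\<And>j. j < N \<Longrightarrow> u j \<in> \<real>"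
  shows "bispectrum N u i j = dft N u i * dft N u j * cnj (dft N u (i + j))"
proof -
  have "dft N u (int N - i - j) = dft N u (- (i + j))"
  proof (rule dft_cong_mod[OF assms(1)])
    have "int N - i - j = - (i + j) + int N" by simp
    then show "(int N - i - j) mod int N = - (i + j) mod int N" by (simp only: mod_add_self2)
  qed
  also have "\<dots> = cnj (dft N u (i + j))" by (rule dft_uminus_real[OF assms(2)])
  finally show ?thesis unfolding bispectrum_def by simp
qed

lemma dft_inversion:
  assumes "N > 0"
  shows "(\<Sum>k<N. dft N u (int k) * cis (2 * pi * real m * real k / real N)) = of_nat N * u (m mod N)"
proof -
  have "(\<Sum>k<N. dft N u (int k) * cis (2 * pi * real m * real k / real N))
        = (\<Sum>l<N. u l * (\<Sum>k<N. cis (2 * pi * real k * real_of_int (int m - int l) / real N)))"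
    unfolding dft_def sum_distrib_right sum_distrib_left
    by (subst sum.swap) (simp add: mult.assoc cis_mult algebra_simps add_divide_distrib diff_divide_distrib)
  also have "\<dots> = (\<Sum>l<N. if l = m mod N then of_nat N * u l else 0)"
  proof (rule sum.cong[OF refl])
    fix l assume "l \<in> {..<N}"
    then have "int N dvd (int m - int l) \<longleftrightarrow> l = m mod N"
      by (auto simp: mod_eq_dvd_iff[symmetric] zmod_int[symmetric] simp flip: of_nat_mod)
    then show "u l * (\<Sum>k<N. cis (2 * pi * real k * real_of_int (int m - int l) / real N))
               = (if l = m mod N then of_nat N * u l else 0)"
      unfolding sum_cis_roots_of_unity[OF assms] by simp
  qed
  also have "\<dots> = of_nat N * u (m mod N)" using assms by (simp add: sum.delta)
  finally show ?thesis .
qed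

lemma cyclic_character_eq_cis:
  fixes r :: "nat \<Rightarrow> complex"
  assumes "N > 0" and mult: "\<And>m n. r (m + n) = r m * r n" and "r N = 1"
  shows "\<exists>s<N. \<forall>k. r k = cis (2 * pi * real s * real k / real N)"
proof -
  have "r 0 = 1" using mult[of 0 N] \<open>r N = 1\<close> by simp
  have powers: "r k = r 1 ^ k" for k
  proof (induction k)
    case (Suc k)
    then show ?case using mult[of 1 k] by simp
  qed (use \<open>r 0 = 1\<close> in simp)
  have "r 1 \<in> {z. z ^ N = 1}" using powers[of N] \<open>r N = 1\<close> by simp
  then obtain s where "s < N" and s: "r 1 = cis (2 * pi * real s / real N)"
    using Complex.bij_betw_roots_unity[OF \<open>N > 0\<close>] unfolding bij_betw_def by auto
  have "r k = cis (2 * pi * real s * real k / real N)" for k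
  proof -
    have "r k = cis (2 * pi * real s / real N) ^ k" using powers[of k] s by simp
    then show ?thesis unfolding Complex.DeMoivre by (simp add: field_simps)
  qed
  with \<open>s < N\<close> show ?thesis by blast
qed

lemma triple_product_eq_imp_norm_eq:
  fixes W W' :: "nat \<Rightarrow> complex"
  assumes "N > 0" and "W 0 \<in> \<real>" "W' 0 \<in> \<real>" "W 0 \<noteq> 0"
    and triple: "\<And>i j. i < N \<Longrightarrow> j < N \<Longrightarrow>
                   W' i * W' j * cnj (W' (i + j)) = W i * W j * cnj (W (i + j))"
  shows "W' 0 = W 0" and "k < N \<Longrightarrow> cmod (W' k) = cmod (W k)"
proof -
  obtain a a' where a: "W 0 = of_real a" and a': "W' 0 = of_real a'"
    using assms(2,3) by (auto elim!: Reals_cases)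
  have "of_real (a' ^ 3) = (of_real (a ^ 3) :: complex)"
    using triple[of 0 0] \<open>N > 0\<close> by (simp add: a a' power3_eq_cube)
  then have "root 3 (a' ^ 3) = root 3 (a ^ 3)" by (simp only: of_real_eq_iff)
  then have "a' = a" by (simp add: odd_real_root_power_cancel)
  then show W0: "W' 0 = W 0" using a a' by simp
  assume "k < N"
  have "(W' k * cnj (W' k)) * W 0 = (W k * cnj (W k)) * W 0"
    using triple[of k 0] \<open>k < N\<close> \<open>N > 0\<close> W0 by (simp add: algebra_simps)
  then have "of_real ((cmod (W' k))\<^sup>2) = (of_real ((cmod (W k))\<^sup>2) :: complex)"
    using \<open>W 0 \<noteq> 0\<close> unfolding complex_norm_square by simp
  then have "(cmod (W' k))\<^sup>2 = (cmod (W k))\<^sup>2" by (simp only: of_real_eq_iff)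
  then show "cmod (W' k) = cmod (W k)" by (simp add: power2_eq_iff_nonneg)
qed

lemma triple_product_eq_imp_phase_shift:
  fixes W W' :: "nat \<Rightarrow> complex"
  assumes "N > 0"
    and periodic: "\<And>k. W (k mod N) = W k" "\<And>k. W' (k mod N) = W' k"
    and real: "W 0 \<in> \<real>" "W' 0 \<in> \<real>"
    and nonzero: "\<And>k. k < N \<Longrightarrow> W k \<noteq> 0"
    and triple: "\<And>i j. i < N \<Longrightarrow> j < N \<Longrightarrow>
                   W' i * W' j * cnj (W' (i + j)) = W i * W j * cnj (W (i + j))"
  shows "\<exists>s<N. \<forall>k. W' k = cis (2 * pi * real s * real k / real N) * W k"
proof -
  have W_nonzero: "W k \<noteq> 0" for k
    using nonzero[of "k mod N"] periodic(1)[of k] \<open>N > 0\<close> by simp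
  note norm_eq = triple_product_eq_imp_norm_eq[OF \<open>N > 0\<close> real W_nonzero triple]
  define r where "r k = W' k / W k" for k
  have W': "W' k = r k * W k" for k
    unfolding r_def using W_nonzero[of k] by simp
  have unimodular: "r k * cnj (r k) = 1" for k
  proof -
    have "cmod (W' k) = cmod (W k)"
      using norm_eq(2)[of "k mod N"] periodic[of k] \<open>N > 0\<close> by simp
    then have "cmod (r k) = 1" unfolding r_def using W_nonzero[of k] by (simp add: norm_divide)
    then show ?thesis using complex_norm_square[of "r k"] by simp
  qed
  have mult_small: "r (i + j) = r i * r j" if "i < N" "j < N" for i j
  proof -
    have "(r i * r j * cnj (r (i + j))) * (W i * W j * cnj (W (i + j))) = 1 * (W i * W j * cnj (W (i + j)))"
      using triple[OF that] unfolding W' by (simp add: algebra_simps)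
    then have "r i * r j * cnj (r (i + j)) = 1" using W_nonzero by simp
    then have "r (i + j) = r (i + j) * (r i * r j * cnj (r (i + j)))" by simp
    also have "\<dots> = r i * r j" using unimodular[of "i + j"] by (simp add: algebra_simps)
    finally show ?thesis .
  qed
  have r_periodic: "r (k mod N) = r k" for k
    unfolding r_def using periodic[of k] by simp
  have "r (m + n) = r m * r n" for m n
  proof -
    have "r (m + n) = r (m mod N + n mod N)"
      using r_periodic[of "m + n"] r_periodic[of "m mod N + n mod N"] by (simp add: mod_add_eq)
    also have "\<dots> = r m * r n"
      using mult_small[of "m mod N" "n mod N"] r_periodic \<open>N > 0\<close> by simp
    finally show ?thesis .
  qed
  moreover have "r N = 1"
    using r_periodic[of N] norm_eq(1) W_nonzero[of 0] unfolding r_def by simp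
  ultimately obtain s where "s < N" "\<forall>k. r k = cis (2 * pi * real s * real k / real N)"
    using cyclic_character_eq_cis[OF \<open>N > 0\<close>] by blast
  then show ?thesis unfolding W' by auto
qed

lemma dft_phase_shift_imp_cyclic_shift:
  assumes "N > 0" and "j < N"
    and phase: "\<And>k. k < N \<Longrightarrow> dft N w' (int k) = cis (2 * pi * real s * real k / real N) * dft N w (int k)"
  shows "w' j = w ((j + s) mod N)"
proof -
  have "of_nat N * w' j = of_nat N * w' (j mod N)" using \<open>j < N\<close> by simp
  also have "\<dots> = (\<Sum>k<N. dft N w' (int k) * cis (2 * pi * real j * real k / real N))"
    by (rule dft_inversion[OF \<open>N > 0\<close>, symmetric])
  also have "\<dots> = (\<Sum>k<N. dft N w (int k) * cis (2 * pi * real (j + s) * real k / real N))"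
  proof (rule sum.cong[OF refl])
    fix k assume "k \<in> {..<N}"
    have "cis (2 * pi * real s * real k / real N) * cis (2 * pi * real j * real k / real N) =
          cis (2 * pi * real (j + s) * real k / real N)"
      unfolding cis_mult by (rule arg_cong[where f = cis]) (simp add: add_divide_distrib algebra_simps)
    with \<open>k \<in> {..<N}\<close> show "dft N w' (int k) * cis (2 * pi * real j * real k / real N) =
          dft N w (int k) * cis (2 * pi * real (j + s) * real k / real N)"
      by (simp add: phase mult.assoc)
  qed
  also have "\<dots> = of_nat N * w ((j + s) mod N)"
    by (rule dft_inversion[OF \<open>N > 0\<close>])
  finally show ?thesis using \<open>N > 0\<close> by simp
qed

lemma bispectrum_eq_imp_cyclic_shift:
  assumes "N > 0"
    and real: "\<And>j. j < N \<Longrightarrow> w j \<in> \<real>" "\<And>j. j < N \<Longrightarrow> w' j \<in> \<real>"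
    and nonzero: "\<And>k. k < N \<Longrightarrow> dft N w (int k) \<noteq> 0"
    and eq: "\<And>i j. i < N \<Longrightarrow> j < N \<Longrightarrow>
               bispectrum N w' (int i) (int j) = bispectrum N w (int i) (int j)"
  shows "\<exists>s<N. \<forall>j<N. w' j = w ((j + s) mod N)"
proof -
  have "\<exists>s<N. \<forall>k. dft N w' (int k) = cis (2 * pi * real s * real k / real N) * dft N w (int k)"
  proof (rule triple_product_eq_imp_phase_shift[OF \<open>N > 0\<close>])
    show "dft N w (int 0) \<in> \<real>" "dft N w' (int 0) \<in> \<real>"
      using dft_zero_in_Reals[of N w, OF real(1)] dft_zero_in_Reals[of N w', OF real(2)] by simp_all
    fix i j assume "i < N" "j < N"
    then show "dft N w' (int i) * dft N w' (int j) * cnj (dft N w' (int (i + j))) =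
               dft N w (int i) * dft N w (int j) * cnj (dft N w (int (i + j)))"
      using eq[of i j] by (simp add: bispectrum_real_eq[OF \<open>N > 0\<close> real(1)] bispectrum_real_eq[OF \<open>N > 0\<close> real(2)])
  qed (use nonzero dft_mod_nat[OF \<open>N > 0\<close>] in simp_all)
  then show ?thesis using dft_phase_shift_imp_cyclic_shift[OF \<open>N > 0\<close>] by blast
qed

definition complex_poly_fun :: "nat \<Rightarrow> ((nat \<Rightarrow> complex) \<Rightarrow> complex) \<Rightarrow> bool" where
  "complex_poly_fun N f \<longleftrightarrow> real_poly_fun N (\<lambda>x. Re (f x)) \<and> real_poly_fun N (\<lambda>x. Im (f x))"

lemma real_poly_fun_uminus: "real_poly_fun N p \<Longrightarrow> real_poly_fun N (\<lambda>x. - p x)"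
  using real_poly_fun.mult[OF real_poly_fun.const[of N "-1"]] by simp

lemma real_poly_fun_diff:
  "real_poly_fun N p \<Longrightarrow> real_poly_fun N q \<Longrightarrow> real_poly_fun N (\<lambda>x. p x - q x)"
  using real_poly_fun.add[of N p "\<lambda>x. - q x"] real_poly_fun_uminus by simp

lemma complex_poly_fun_const: "complex_poly_fun N (\<lambda>x. c)"
  unfolding complex_poly_fun_def by (simp add: real_poly_fun.const)

lemma complex_poly_fun_coord: "j < N \<Longrightarrow> complex_poly_fun N (\<lambda>x. x j)"
  unfolding complex_poly_fun_def by (simp add: real_poly_fun.re_coord real_poly_fun.im_coord)

lemma complex_poly_fun_add:
  "complex_poly_fun N f \<Longrightarrow> complex_poly_fun N g \<Longrightarrow> complex_poly_fun N (\<lambda>x. f x + g x)"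
  unfolding complex_poly_fun_def by (simp add: real_poly_fun.add)

lemma complex_poly_fun_mult:
  "complex_poly_fun N f \<Longrightarrow> complex_poly_fun N g \<Longrightarrow> complex_poly_fun N (\<lambda>x. f x * g x)"
  unfolding complex_poly_fun_def by (simp add: real_poly_fun.add real_poly_fun.mult real_poly_fun_diff)

lemma complex_poly_fun_cnj: "complex_poly_fun N f \<Longrightarrow> complex_poly_fun N (\<lambda>x. cnj (f x))"
  unfolding complex_poly_fun_def by (simp add: real_poly_fun_uminus)

lemma complex_poly_fun_sum:
  "finite A \<Longrightarrow> (\<And>a. a \<in> A \<Longrightarrow> complex_poly_fun N (f a)) \<Longrightarrow> complex_poly_fun N (\<lambda>x. \<Sum>a\<in>A. f a x)"
  by (induction A rule: finite_induct) (simp_all add: complex_poly_fun_const complex_poly_fun_add)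

lemma complex_poly_fun_prod:
  "finite A \<Longrightarrow> (\<And>a. a \<in> A \<Longrightarrow> complex_poly_fun N (f a)) \<Longrightarrow> complex_poly_fun N (\<lambda>x. \<Prod>a\<in>A. f a x)"
  by (induction A rule: finite_induct) (simp_all add: complex_poly_fun_const complex_poly_fun_mult)

lemma complex_poly_fun_dft:
  "(\<And>j. j < N \<Longrightarrow> complex_poly_fun N (\<lambda>x. u x j)) \<Longrightarrow> complex_poly_fun N (\<lambda>x. dft N (u x) k)"
  unfolding dft_def by (intro complex_poly_fun_sum complex_poly_fun_mult complex_poly_fun_const) auto

lemma complex_poly_fun_norm_square:
  "complex_poly_fun N f \<Longrightarrow> complex_poly_fun N (\<lambda>x. of_real ((cmod (f x))\<^sup>2))"
  unfolding complex_norm_square by (intro complex_poly_fun_mult complex_poly_fun_cnj)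

lemma real_algebraic_set_zero_set:
  assumes "complex_poly_fun N f"
  shows "real_algebraic_set N {x. f x = 0}"
  unfolding real_algebraic_set_def
proof (intro exI conjI)
  show "finite {\<lambda>x. Re (f x), \<lambda>x. Im (f x)}" by simp
  show "\<forall>p\<in>{\<lambda>x. Re (f x), \<lambda>x. Im (f x)}. real_poly_fun N p"
    using assms unfolding complex_poly_fun_def by simp
  show "{x. f x = 0} = {x. \<forall>p\<in>{\<lambda>x. Re (f x), \<lambda>x. Im (f x)}. p x = 0}"
    by (auto simp: complex_eq_iff)
qed

definition mag_dft_prod :: "nat \<Rightarrow> (nat \<Rightarrow> complex) \<Rightarrow> complex" where
  "mag_dft_prod N x = (\<Prod>k<N. dft N (mag_sq x) (int k) * dft N (fourier_mag_sq N x) (int k))"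

lemma complex_poly_fun_mag_dft_prod: "complex_poly_fun N (mag_dft_prod N)"
proof -
  have "complex_poly_fun N (\<lambda>x. mag_dft_prod N x)"
    unfolding mag_dft_prod_def mag_sq_def fourier_mag_sq_def
    by (intro complex_poly_fun_prod complex_poly_fun_mult complex_poly_fun_dft
        complex_poly_fun_norm_square complex_poly_fun_coord) simp_all
  then show ?thesis by (simp add: eta_contract_eq)
qed

lemma mag_dft_prod_nonzero_iff:
  "mag_dft_prod N x \<noteq> 0 \<longleftrightarrow>
     (\<forall>k<N. dft N (mag_sq x) (int k) \<noteq> 0 \<and> dft N (fourier_mag_sq N x) (int k) \<noteq> 0)"
  unfolding mag_dft_prod_def by auto

lemma dft_const_plus_delta:
  assumes "N > 0" and u: "\<And>j. j < N \<Longrightarrow> u j = (if j = 0 then a + b else a)"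
  shows "dft N u k = a * (if int N dvd k then of_nat N else 0) + b"
proof -
  have "dft N u k = (\<Sum>j<N. a * cis (2 * pi * real j * real_of_int (- k) / real N) +
                       (if j = 0 then b else 0))"
    unfolding dft_def by (rule sum.cong) (auto simp: u algebra_simps)
  also have "\<dots> = a * (\<Sum>j<N. cis (2 * pi * real j * real_of_int (- k) / real N)) + b"
    using \<open>N > 0\<close> by (simp add: sum.distrib sum_distrib_left)
  finally show ?thesis unfolding sum_cis_roots_of_unity[OF \<open>N > 0\<close>] by simp
qed

lemma dft_const_plus_delta_nonzero:
  assumes "N > 0" and "a \<ge> 0" "b > 0"
    and "\<And>j. j < N \<Longrightarrow> u j = of_real (if j = 0 then a + b else a)"
  shows "dft N u k \<noteq> 0"
proof -
  have "dft N u k = of_real (a * (if int N dvd k then real N else 0) + b)"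
    using dft_const_plus_delta[OF \<open>N > 0\<close>, of u "of_real a" "of_real b"] assms(4) by simp
  moreover have "a * (if int N dvd k then real N else 0) + b > 0"
    using assms(2,3) by (simp add: add_nonneg_pos)
  ultimately show ?thesis by (auto simp del: of_real_add of_real_mult)
qed

lemma mag_dft_prod_nonzero_example:
  assumes "N > 0"
  shows "mag_dft_prod N (\<lambda>j. if j = 0 then 2 else 1) \<noteq> 0"
proof -
  define x :: "nat \<Rightarrow> complex" where "x j = (if j = 0 then 2 else 1)" for j
  have "dft N x (int k) = of_real (if k = 0 then real N + 1 else 1)" if "k < N" for k
    using dft_const_plus_delta[OF \<open>N > 0\<close>, of x 1 1 "int k"] that
    by (auto simp: x_def)
  then have "fourier_mag_sq N x k = of_real (if k = 0 then 1 + (real N ^ 2 + 2 * real N) else 1)"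
    if "k < N" for k
    using that by (simp add: fourier_mag_sq_def power2_eq_square algebra_simps)
  then have "dft N (fourier_mag_sq N x) (int k) \<noteq> 0" for k
    using \<open>N > 0\<close> by (intro dft_const_plus_delta_nonzero) (simp_all add: add_nonneg_pos)
  moreover have "dft N (mag_sq x) (int k) \<noteq> 0" for k
    using \<open>N > 0\<close> by (intro dft_const_plus_delta_nonzero[where a = 1 and b = 3]) (simp_all add: mag_sq_def x_def)
  ultimately show ?thesis unfolding mag_dft_prod_nonzero_iff x_def by blast
qed

lemma mag_sq_eq_iff: "mag_sq x j = mag_sq y l \<longleftrightarrow> cmod (x j) = cmod (y l)"
  unfolding mag_sq_def by (simp del: of_real_power add: power2_eq_iff_nonneg)

lemma fourier_mag_sq_eq_iff:
  "fourier_mag_sq N x k = fourier_mag_sq N y l \<longleftrightarrow> cmod (dft N x (int k)) = cmod (dft N y (int l))"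
  unfolding fourier_mag_sq_def by (simp del: of_real_power add: power2_eq_iff_nonneg)

lemma BH_eq_imp_bispectra_eq:
  assumes "BH N x' = BH N x" and "i < N" "j < N"
  shows "BM N x' (int i) (int j) = BM N x (int i) (int j)"
    and "BFM N x' (int i) (int j) = BFM N x (int i) (int j)"
proof -
  have "fst (BH N x') (int i, int j) = fst (BH N x) (int i, int j)"
       "snd (BH N x') (int i, int j) = snd (BH N x) (int i, int j)"
    using assms(1) by simp_all
  then show "BM N x' (int i) (int j) = BM N x (int i) (int j)"
            "BFM N x' (int i) (int j) = BFM N x (int i) (int j)"
    using assms(2,3) unfolding BH_def by simp_all
qed

lemma BH_eq_imp_magnitude_shifts:
  assumes "N > 0" and "mag_dft_prod N x \<noteq> 0" and BH_eq: "BH N x' = BH N x"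
  shows "\<exists>k0 n0. k0 < N \<and> n0 < N \<and>
           (\<forall>j<N. cmod (x' j) = cmod (x ((j + k0) mod N))) \<and>
           (\<forall>k<N. cmod (dft N x' (int k)) = cmod (dft N x (int ((k + n0) mod N))))"
proof -
  have nonzero: "\<forall>k<N. dft N (mag_sq x) (int k) \<noteq> 0 \<and> dft N (fourier_mag_sq N x) (int k) \<noteq> 0"
    using assms(2) mag_dft_prod_nonzero_iff by blast
  obtain k0 where "k0 < N" "\<forall>j<N. mag_sq x' j = mag_sq x ((j + k0) mod N)"
    using bispectrum_eq_imp_cyclic_shift[OF \<open>N > 0\<close>, of "mag_sq x" "mag_sq x'"] nonzero
      BH_eq_imp_bispectra_eq(1)[OF BH_eq] unfolding BM_def by (auto simp: mag_sq_def)
  moreover obtain n0 where "n0 < N" "\<forall>k<N. fourier_mag_sq N x' k = fourier_mag_sq N x ((k + n0) mod N)"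
    using bispectrum_eq_imp_cyclic_shift[OF \<open>N > 0\<close>, of "fourier_mag_sq N x" "fourier_mag_sq N x'"] nonzero
      BH_eq_imp_bispectra_eq(2)[OF BH_eq] unfolding BFM_def by (auto simp: fourier_mag_sq_def)
  ultimately show ?thesis by (auto simp: mag_sq_eq_iff fourier_mag_sq_eq_iff)
qed

theorem theorem5p3:
  fixes N :: nat
  assumes "N \<ge> 2"
  shows "\<exists>Z. real_algebraic_set N Z \<and> Z \<noteq> UNIV \<and>
    (\<forall>x x'. x \<notin> Z \<longrightarrow> BH N x' = BH N x \<longrightarrow>
      (\<exists>k0 n0. k0 < N \<and> n0 < N \<and>
         (\<forall>j<N. cmod (x' j) = cmod (x ((j + k0) mod N))) \<and>
         (\<forall>k<N. cmod (dft N x' (int k)) = cmod (dft N x (int ((k + n0) mod N))))))"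
proof -
  have "N > 0" using assms by simp
  let ?Z = "{x. mag_dft_prod N x = 0}"
  have "real_algebraic_set N ?Z"
    by (rule real_algebraic_set_zero_set[OF complex_poly_fun_mag_dft_prod])
  moreover have "?Z \<noteq> UNIV"
    using mag_dft_prod_nonzero_example[OF \<open>N > 0\<close>] by blast
  moreover note BH_eq_imp_magnitude_shifts[OF \<open>N > 0\<close>]
  ultimately show ?thesis by blast
qed

end
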